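(* Let $\mathcal S\in\{\mathcal C,\mathcal E\}$ and $k\ge1$. Then $$\Big(\sum_{n\ge0}\#_{\mathcal S}\{(0,0)\xrightarrow{n}(k-i,i)\}t^n\Big)_{0\le i\le k}=\sum_{(n_1,\dots,n_p)\in\mathcal C_k}t^p\,J(n_1)_{n_1+1}F_{n_1+1}\,J(n_2)_{n_1+n_2+1}F_{n_1+n_2+1}\cdots J(n_p)_{n_1+\cdots+n_p+1}F_{n_1+\cdots+n_p+1}.$$
   Context: Let $\mathbb N=\{0,1,2,\dots\}$, $\mathcal C=\{(-1,1),(0,1),(1,1),(1,0),(1,-1)\}$, $\mathcal E=\{(-1,1),(0,1),(1,1),(1,-1)\}$. For a step set $\mathcal S$, $\#_{\mathcal S}\{(0,0)\xrightarrow{n}(i,j)\}$ is the number of sequences $p_0=(0,0),p_1,\dots,p_n=(i,j)$ of points of $\mathbb N^2$ with $p_m-p_{m-1}\in\mathcal S$. $\mathcal C_k$ is the set of all ordered tuples $(n_1,\dots,n_p)$ ($p\ge1$) with each $n_r\in\{1,2\}$ and $n_1+\cdots+n_p=k$. For $n\ge2$, $F_n\in\mathcal M_{n,n}(\mathbb R(t))$ is the inverse of the $n\times n$ tridiagonal matrix with diagonal entries $1$ and entries immediately above and below the diagonal equal to $-t$; its entries are identified with their power series in $t$. For $m\ge3$, $A_m\in\mathcal M_{m-2,m}(\mathbb R)$ has entries $(A_m)_{r,r+1}=1$ ($1\le r\le m-2$) and $0$ elsewhere. For $m\ge2$, $D_m\in\mathcal M_{m-1,m}(\mathbb R)$ has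 $(D_m)_{r,r+1}=1$ and $0$ elsewhere, and $B_m\in\mathcal M_{m-1,m}(\mathbb R)$ has $(B_m)_{r,r}=(B_m)_{r,r+1}=1$ ($1\le r\le m-1$) and $0$ elsewhere. Set $J(2)_m=A_m$; $J(1)_m=B_m$ if $\mathcal S=\mathcal C$ and $J(1)_m=D_m$ if $\mathcal S=\mathcal E$. The entries of the row vector are indexed by $i=0,\dots,k$, corresponding to the point $(k-i,i)$. *)

theory Defs
  imports "Jordan_Normal_Form.Matrix" "HOL-Computational_Algebra.Formal_Power_Series"
begin

definition stepsC :: "(int \<times> int) set" where
  "stepsC = {(-1,1),(0,1),(1,1),(1,0),(1,-1)}"

definition stepsE :: "(int \<times> int) set" where
  "stepsE = {(-1,1),(0,1),(1,1),(1,-1)}"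

definition walk_pos :: "(int \<times> int) list \<Rightarrow> int \<times> int" where
  "walk_pos ss = ((\<Sum>s\<leftarrow>ss. fst s), (\<Sum>s\<leftarrow>ss. snd s))"

text \<open>Walks of length n from (0,0) to p staying in N^2, encoded by their step sequences
  (in bijection with the point sequences p_0 = (0,0), ..., p_n = p).\<close>
definition walks :: "(int \<times> int) set \<Rightarrow> nat \<Rightarrow> int \<times> int \<Rightarrow> (int \<times> int) list set" where
  "walks S n p = {ss. length ss = n \<and> set ss \<subseteq> S
      \<and> (\<forall>m\<le>n. 0 \<le> fst (walk_pos (take m ss)) \<and> 0 \<le> snd (walk_pos (take m ss)))
      \<and> walk_pos ss = p}"

definition num_walks :: "(int \<times> int) set \<Rightarrow> nat \<Rightarrow> int \<times> int \<Rightarrow> nat" where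
  "num_walks S n p = card (walks S n p)"

definition comps12 :: "nat \<Rightarrow> nat list set" where
  "comps12 k = {ns. ns \<noteq> [] \<and> set ns \<subseteq> {1,2} \<and> sum_list ns = k}"

definition tridiag :: "nat \<Rightarrow> real fps mat" where
  "tridiag n = mat n n (\<lambda>(r,c). if r = c then 1
                                 else if r = c + 1 \<or> c = r + 1 then - fps_X else 0)"

definition Fmat :: "nat \<Rightarrow> real fps mat" where
  "Fmat n = (THE M. M \<in> carrier_mat n n \<and> tridiag n * M = 1\<^sub>m n \<and> M * tridiag n = 1\<^sub>m n)"

text \<open>A_m, B_m, D_m, 0-indexed (paper's entry (r,c) is entry (r-1,c-1) here).\<close>
definition Amat :: "nat \<Rightarrow> real fps mat" where
  "Amat m = mat (m - 2) m (\<lambda>(r,c). if c = r + 1 then 1 else 0)"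

definition Bmat :: "nat \<Rightarrow> real fps mat" where
  "Bmat m = mat (m - 1) m (\<lambda>(r,c). if c = r \<or> c = r + 1 then 1 else 0)"

definition Dmat :: "nat \<Rightarrow> real fps mat" where
  "Dmat m = mat (m - 1) m (\<lambda>(r,c). if c = r + 1 then 1 else 0)"

definition Jmat :: "(int \<times> int) set \<Rightarrow> nat \<Rightarrow> nat \<Rightarrow> real fps mat" where
  "Jmat S n m = (if n = 2 then Amat m else if S = stepsC then Bmat m else Dmat m)"

text \<open>JF_prod S M s ns = M * J(n_1)_{s+n_1+1} F_{s+n_1+1} * J(n_2)_{s+n_1+n_2+1} ... \<close>
fun JF_prod :: "(int \<times> int) set \<Rightarrow> real fps mat \<Rightarrow> nat \<Rightarrow> nat list \<Rightarrow> real fps mat" where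
  "JF_prod S M s [] = M"
| "JF_prod S M s (n # ns) =
     JF_prod S (M * Jmat S n (s + n + 1) * Fmat (s + n + 1)) (s + n) ns"

end

theory Submission
  imports Defs "Jordan_Normal_Form.Determinant"
begin

(* Group the endpoints by their level x + y = k and let V_k be the row vector of walk generating
   functions at level k.  The last step of a walk moves within its level ((-1,1), (1,-1)), up one
   level ((0,1), (1,0)) or up two levels ((1,1)), which gives
     V_k T_(k+1) = [k = 0] e_0 + t (V_(k-1) J(1)_(k+1) + V_(k-2) J(2)_(k+1))
   with T the tridiagonal matrix.  Its determinant has constant term 1, so T is invertible over
   power series and V_k is determined by the lower levels through F_(k+1) = T_(k+1)^-1.
   Splitting a composition of k into its last part and the rest shows that the sum over
   compositions satisfies the same recursion, and both sides agree at level 0. *)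

interpretation fps_nth_0: comm_ring_hom "\<lambda>f :: 'a :: comm_ring_1 fps. fps_nth f 0"
  by unfold_locales auto

lemma adj_mat_inverse:
  fixes A :: "'a :: comm_ring_1 mat"
  assumes A: "A \<in> carrier_mat n n" and d: "d * det A = 1"
  shows "A * (d \<cdot>\<^sub>m adj_mat A) = 1\<^sub>m n" "(d \<cdot>\<^sub>m adj_mat A) * A = 1\<^sub>m n"
proof -
  have scale: "d \<cdot>\<^sub>m (det A \<cdot>\<^sub>m 1\<^sub>m n) = 1\<^sub>m n"
    by (rule eq_matI) (auto simp: d mult.assoc[symmetric])
  show "A * (d \<cdot>\<^sub>m adj_mat A) = 1\<^sub>m n"
    using adj_mat[OF A] by (simp add: mult_smult_distrib[OF A] scale)
  show "(d \<cdot>\<^sub>m adj_mat A) * A = 1\<^sub>m n"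
    using adj_mat[OF A] by (simp add: mult_smult_assoc_mat[OF _ A] scale)
qed

lemma inverse_mat_unique:
  fixes A :: "'a :: semiring_1 mat"
  assumes "A \<in> carrier_mat n n" "B \<in> carrier_mat n n" "B' \<in> carrier_mat n n"
    and "B * A = 1\<^sub>m n" "A * B' = 1\<^sub>m n"
  shows "B = B'"
proof -
  have "B = B * (A * B')" using assms(5) right_mult_one_mat[OF assms(2)] by simp
  also have "\<dots> = (B * A) * B'" using assms(1-3) by (simp add: assoc_mult_mat)
  also have "\<dots> = B'" using assms(4) left_mult_one_mat[OF assms(3)] by simp
  finally show ?thesis .
qed

lemma tridiag_carrier [simp]: "tridiag n \<in> carrier_mat n n"
  by (simp add: tridiag_def)

lemma fps_nth_0_det_tridiag: "fps_nth (det (tridiag n)) 0 = 1"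
proof -
  have "map_mat (\<lambda>f. fps_nth f 0) (tridiag n) = 1\<^sub>m n"
    by (rule eq_matI) (auto simp: tridiag_def)
  then show ?thesis
    using fps_nth_0.hom_det[of "tridiag n"] by simp
qed

lemma Fmat_carrier [simp]: "Fmat n \<in> carrier_mat n n"
  and tridiag_mult_Fmat: "tridiag n * Fmat n = 1\<^sub>m n"
proof -
  let ?inverts = "\<lambda>M. M \<in> carrier_mat n n \<and> tridiag n * M = 1\<^sub>m n \<and> M * tridiag n = 1\<^sub>m n"
  define F where "F = inverse (det (tridiag n)) \<cdot>\<^sub>m adj_mat (tridiag n)"
  have "inverse (det (tridiag n)) * det (tridiag n) = 1"
    by (simp add: fps_nth_0_det_tridiag inverse_mult_eq_1)
  then have F: "?inverts F"
    using adj_mat_inverse[OF tridiag_carrier] adj_mat(1)[OF tridiag_carrier] by (simp add: F_def)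
  have "?inverts (THE M. ?inverts M)"
  proof (rule theI)
    show "?inverts F" by (fact F)
    show "M = F" if "?inverts M" for M
      using inverse_mat_unique[of "tridiag n" n M F] that F by simp
  qed
  then show "Fmat n \<in> carrier_mat n n" "tridiag n * Fmat n = 1\<^sub>m n"
    unfolding Fmat_def by simp_all
qed

lemma Fmat_1: "Fmat 1 = 1\<^sub>m 1"
proof -
  have "tridiag 1 = 1\<^sub>m 1"
    by (rule eq_matI) (auto simp: tridiag_def)
  then show ?thesis
    using tridiag_mult_Fmat[of 1] left_mult_one_mat[OF Fmat_carrier] by simp
qed

(* Row vectors are functions on nat; only the entries below dim_row A are read. *)
definition row_mult :: "(nat \<Rightarrow> 'a :: semiring_0) \<Rightarrow> 'a mat \<Rightarrow> nat \<Rightarrow> 'a" where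
  "row_mult u A j = (\<Sum>l<dim_row A. u l * A $$ (l, j))"

lemma row_mult_cong:
  "(\<And>l. l < dim_row A \<Longrightarrow> u l = v l) \<Longrightarrow> row_mult u A j = row_mult v A j"
  by (simp add: row_mult_def)

lemma row_mult_zero_rows: "dim_row A = 0 \<Longrightarrow> row_mult u A j = 0"
  by (simp add: row_mult_def)

lemma row_mult_add: "row_mult (\<lambda>l. u l + v l) A j = row_mult u A j + row_mult v A j"
  by (simp add: row_mult_def distrib_right sum.distrib)

lemma row_mult_scale: "row_mult (\<lambda>l. c * u l) A j = c * row_mult u A j"
  by (simp add: row_mult_def sum_distrib_left mult.assoc)

lemma row_mult_linear:
  "row_mult (\<lambda>l. \<Sum>x\<in>X. c x * f x l) A j = (\<Sum>x\<in>X. c x * row_mult (f x) A j)"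
  unfolding row_mult_def by (simp add: sum_distrib_left sum_distrib_right mult.assoc sum.swap[of _ X])

lemma row_mult_mult:
  assumes "A \<in> carrier_mat n m" "B \<in> carrier_mat m p" "j < p"
  shows "row_mult u (A * B) j = row_mult (row_mult u A) B j"
proof -
  have "row_mult u (A * B) j = (\<Sum>l<n. u l * (\<Sum>r<m. A $$ (l, r) * B $$ (r, j)))"
    using assms by (simp add: row_mult_def scalar_prod_def atLeast0LessThan)
  also have "\<dots> = (\<Sum>r<m. (\<Sum>l<n. u l * A $$ (l, r)) * B $$ (r, j))"
    by (simp add: sum_distrib_left sum_distrib_right mult.assoc sum.swap[of _ "{..<n}"])
  finally show ?thesis
    using assms by (simp add: row_mult_def)
qed

lemma row_mult_one: "j < n \<Longrightarrow> row_mult u (1\<^sub>m n) j = (u j :: 'a :: semiring_1)"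
  by (simp add: row_mult_def if_distrib[of "\<lambda>x. _ * x"] cong: if_cong)

lemma row_mult_right_inverse:
  fixes A :: "'a :: semiring_1 mat"
  assumes "A \<in> carrier_mat n n" "B \<in> carrier_mat n n" "A * B = 1\<^sub>m n" "j < n"
  shows "row_mult (row_mult u A) B j = u j"
  using row_mult_mult[OF assms(1,2,4), of u] assms(3,4) by (simp add: row_mult_one)

lemma index_mult_mat_row_mult:
  assumes "P \<in> carrier_mat 1 n" "A \<in> carrier_mat n m" "j < m"
  shows "(P * A) $$ (0, j) = row_mult (\<lambda>l. P $$ (0, l)) A j"
  using assms by (simp add: row_mult_def scalar_prod_def atLeast0LessThan)

lemma row_mult_tridiag:
  assumes "i \<le> k"
  shows "row_mult u (tridiag (Suc k)) i
    = u i - fps_X * ((if 1 \<le> i then u (i - 1) else 0) + (if i < k then u (i + 1) else 0))"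
proof -
  have "row_mult u (tridiag (Suc k)) i
      = (\<Sum>l<Suc k. (if l = i then u i else 0) + (if l = i + 1 then - fps_X * u (i + 1) else 0)
          + (if l + 1 = i then - fps_X * u (i - 1) else 0))"
    unfolding row_mult_def by (rule sum.cong) (use assms in \<open>auto simp: tridiag_def\<close>)
  also have "\<dots> = u i - fps_X * ((if 1 \<le> i then u (i - 1) else 0) + (if i < k then u (i + 1) else 0))"
    using assms by (cases i) (auto simp: sum.distrib algebra_simps)
  finally show ?thesis .
qed

lemma row_mult_Bmat:
  assumes "j \<le> k"
  shows "row_mult v (Bmat (Suc k)) j = (if 1 \<le> j then v (j - 1) else 0) + (if j < k then v j else 0)"
proof -
  have "row_mult v (Bmat (Suc k)) j
      = (\<Sum>l<k. (if l + 1 = j then v (j - 1) else 0) + (if l = j then v j else 0))"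
    unfolding row_mult_def by (rule sum.cong) (use assms in \<open>auto simp: Bmat_def\<close>)
  then show ?thesis
    using assms by (cases j) (auto simp: sum.distrib)
qed

lemma row_mult_Dmat:
  assumes "j \<le> k"
  shows "row_mult v (Dmat (Suc k)) j = (if 1 \<le> j then v (j - 1) else 0)"
proof -
  have "row_mult v (Dmat (Suc k)) j = (\<Sum>l<k. if l + 1 = j then v (j - 1) else 0)"
    unfolding row_mult_def by (rule sum.cong) (use assms in \<open>auto simp: Dmat_def\<close>)
  then show ?thesis
    using assms by (cases j) auto
qed

lemma row_mult_Amat:
  assumes "j \<le> k"
  shows "row_mult v (Amat (Suc k)) j = (if 1 \<le> j \<and> j < k then v (j - 1) else 0)"
proof -
  have "row_mult v (Amat (Suc k)) j = (\<Sum>l<k - 1. if l + 1 = j then v (j - 1) else 0)"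
    unfolding row_mult_def by (rule sum.cong) (use assms in \<open>auto simp: Amat_def\<close>)
  then show ?thesis
    using assms by (cases j) auto
qed

lemma Jmat_carrier: "n \<in> {1, 2} \<Longrightarrow> Jmat S n m \<in> carrier_mat (m - n) m"
  by (auto simp: Jmat_def Amat_def Bmat_def Dmat_def)

(* Jmat S n (k + 1) has k + 1 - n rows, so level k - n is read only when n \<le> k and the
   truncated subtraction is harmless. *)
definition lower_levels ::
    "(int \<times> int) set \<Rightarrow> (nat \<Rightarrow> nat \<Rightarrow> real fps) \<Rightarrow> nat \<Rightarrow> nat \<Rightarrow> real fps" where
  "lower_levels S u k j = (if k = 0 \<and> j = 0 then 1 else 0)
     + fps_X * (row_mult (u (k - 1)) (Jmat S 1 (k + 1)) j + row_mult (u (k - 2)) (Jmat S 2 (k + 1)) j)"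

lemma level_recurrence_unique:
  assumes u: "\<And>k i. i \<le> k \<Longrightarrow> u k i = row_mult (lower_levels S u k) (Fmat (k + 1)) i"
    and v: "\<And>k i. i \<le> k \<Longrightarrow> v k i = row_mult (lower_levels S v k) (Fmat (k + 1)) i"
    and "i \<le> k"
  shows "u k i = v k i"
  using \<open>i \<le> k\<close>
proof (induction k arbitrary: i rule: less_induct)
  case (less k)
  have "lower_levels S u k = lower_levels S v k"
  proof
    fix j
    have "row_mult (u (k - n)) (Jmat S n (k + 1)) j = row_mult (v (k - n)) (Jmat S n (k + 1)) j"
      if "n \<in> {1, 2}" for n
      using that less.IH[of "k - n"] Jmat_carrier[OF that, of S "k + 1"]
      by (intro row_mult_cong) auto
    then show "lower_levels S u k j = lower_levels S v k j"
      by (simp add: lower_levels_def)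
  qed
  then show ?case
    using u[OF less.prems] v[OF less.prems] by simp
qed

lemma all_take_snoc_iff:
  "(\<forall>m\<le>Suc (length xs). P (take m (xs @ [x])))
     \<longleftrightarrow> (\<forall>m\<le>length xs. P (take m xs)) \<and> P (xs @ [x])"
  by (auto simp: le_Suc_eq)

lemma snoc_in_walks_iff:
  "ss @ [s] \<in> walks S (Suc n) p \<longleftrightarrow>
     s \<in> S \<and> 0 \<le> fst p \<and> 0 \<le> snd p \<and> ss \<in> walks S n (fst p - fst s, snd p - snd s)"
proof -
  let ?in_quadrant = "\<lambda>xs. 0 \<le> fst (walk_pos xs) \<and> 0 \<le> snd (walk_pos xs)"
  have "walk_pos (ss @ [s]) = (fst (walk_pos ss) + fst s, snd (walk_pos ss) + snd s)"
    by (simp add: walk_pos_def)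
  then show ?thesis
    unfolding walks_def using all_take_snoc_iff[where P = ?in_quadrant and xs = ss and x = s]
    by (auto simp del: take_append)
qed

lemma walks_Suc:
  assumes "0 \<le> fst p" "0 \<le> snd p"
  shows "walks S (Suc n) p = (\<Union>s\<in>S. (\<lambda>ss. ss @ [s]) ` walks S n (fst p - fst s, snd p - snd s))"
proof (intro Set.set_eqI iffI)
  fix xs assume xs: "xs \<in> walks S (Suc n) p"
  then obtain ss s where "xs = ss @ [s]"
    by (cases xs rule: rev_cases) (auto simp: walks_def)
  with xs show "xs \<in> (\<Union>s\<in>S. (\<lambda>ss. ss @ [s]) ` walks S n (fst p - fst s, snd p - snd s))"
    by (auto simp: snoc_in_walks_iff)
qed (use assms in \<open>auto simp: snoc_in_walks_iff\<close>)

lemma finite_walks: "finite S \<Longrightarrow> finite (walks S n p)"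
  by (rule finite_subset[OF _ finite_lists_length_eq[of S n]]) (auto simp: walks_def)

lemma num_walks_Suc:
  assumes "finite S" "0 \<le> fst p" "0 \<le> snd p"
  shows "num_walks S (Suc n) p = (\<Sum>s\<in>S. num_walks S n (fst p - fst s, snd p - snd s))"
  unfolding num_walks_def walks_Suc[OF assms(2,3)]
  by (subst card_UN_disjoint) (auto simp: assms finite_walks card_image inj_on_def)

definition walk_gf :: "(int \<times> int) set \<Rightarrow> int \<times> int \<Rightarrow> real fps" where
  "walk_gf S p = Abs_fps (\<lambda>n. real (num_walks S n p))"

lemma walk_gf_outside:
  assumes "\<not> (0 \<le> fst p \<and> 0 \<le> snd p)"
  shows "walk_gf S p = 0"
proof -
  have "walks S n p = {}" for n
    using assms by (auto simp: walks_def)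
  then show ?thesis
    by (simp add: walk_gf_def num_walks_def fps_zero_def)
qed

lemma walk_gf_rec:
  assumes "finite S" "0 \<le> fst p" "0 \<le> snd p"
  shows "walk_gf S p = (if p = (0, 0) then 1 else 0)
    + fps_X * (\<Sum>s\<in>S. walk_gf S (fst p - fst s, snd p - snd s))"
proof (rule fps_ext)
  fix n
  show "fps_nth (walk_gf S p) n = fps_nth ((if p = (0, 0) then 1 else 0)
    + fps_X * (\<Sum>s\<in>S. walk_gf S (fst p - fst s, snd p - snd s))) n"
  proof (cases n)
    case 0
    have "walks S 0 p = (if p = (0, 0) then {[]} else {})"
      by (auto simp: walks_def walk_pos_def)
    then show ?thesis
      using 0 by (simp add: walk_gf_def num_walks_def)
  next
    case (Suc m)
    then show ?thesis
      by (simp add: walk_gf_def fps_X_mult_nth fps_sum_nth num_walks_Suc[OF assms])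
  qed
qed

definition level_gf :: "(int \<times> int) set \<Rightarrow> nat \<Rightarrow> nat \<Rightarrow> real fps" where
  "level_gf S k i = walk_gf S (int k - int i, int i)"

lemma walk_gf_eq_level_gf:
  "walk_gf S (a, b) = (if 0 \<le> a \<and> 0 \<le> b then level_gf S (nat (a + b)) (nat b) else 0)"
  by (simp add: level_gf_def walk_gf_outside)

lemma level_gf_rec:
  assumes S: "S = stepsC \<or> S = stepsE" and i: "i \<le> k"
  shows "level_gf S k i = (if k = 0 \<and> i = 0 then 1 else 0) + fps_X * (
      (if 1 \<le> i then level_gf S k (i - 1) else 0) + (if i < k then level_gf S k (i + 1) else 0)
    + (if 1 \<le> i then level_gf S (k - 1) (i - 1) else 0)
    + (if S = stepsC \<and> i < k then level_gf S (k - 1) i else 0)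
    + (if 1 \<le> i \<and> i < k then level_gf S (k - 2) (i - 1) else 0))"
proof -
  define w where "w s = walk_gf S (int k - int i - fst s, int i - snd s)" for s :: "int \<times> int"
  have "finite S" using S by (auto simp: stepsC_def stepsE_def)
  then have "level_gf S k i = (if k = 0 \<and> i = 0 then 1 else 0) + fps_X * (\<Sum>s\<in>S. w s)"
    using i walk_gf_rec[of S "(int k - int i, int i)"] by (simp add: level_gf_def w_def)
  moreover have
    "w (-1, 1) = (if 1 \<le> i then level_gf S k (i - 1) else 0)"
    "w (1, -1) = (if i < k then level_gf S k (i + 1) else 0)"
    "w (0, 1) = (if 1 \<le> i then level_gf S (k - 1) (i - 1) else 0)"
    "w (1, 0) = (if i < k then level_gf S (k - 1) i else 0)"
    "w (1, 1) = (if 1 \<le> i \<and> i < k then level_gf S (k - 2) (i - 1) else 0)"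
    using i by (auto simp: w_def walk_gf_eq_level_gf nat_diff_distrib nat_add_distrib)
  moreover have "sum w stepsC = w (-1, 1) + w (1, -1) + w (0, 1) + w (1, 0) + w (1, 1)"
    and "sum w stepsE = w (-1, 1) + w (1, -1) + w (0, 1) + w (1, 1)"
    by (simp_all add: stepsC_def stepsE_def algebra_simps)
  moreover have "stepsE \<noteq> stepsC"
  proof
    have "(1, 0) \<notin> stepsE" "(1, 0) \<in> stepsC" by (simp_all add: stepsC_def stepsE_def)
    then show "stepsE = stepsC \<Longrightarrow> False" by blast
  qed
  ultimately show ?thesis
    using S by (auto simp: algebra_simps)
qed

lemma level_gf_tridiag:
  assumes S: "S = stepsC \<or> S = stepsE" and i: "i \<le> k"
  shows "row_mult (level_gf S k) (tridiag (k + 1)) i = lower_levels S (level_gf S) k i"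
proof -
  have "row_mult (level_gf S (k - 1)) (Jmat S 1 (k + 1)) i
      = (if 1 \<le> i then level_gf S (k - 1) (i - 1) else 0)
        + (if S = stepsC \<and> i < k then level_gf S (k - 1) i else 0)"
    using i by (simp add: Jmat_def row_mult_Bmat row_mult_Dmat)
  moreover have "row_mult (level_gf S (k - 2)) (Jmat S 2 (k + 1)) i
      = (if 1 \<le> i \<and> i < k then level_gf S (k - 2) (i - 1) else 0)"
    using i by (simp add: Jmat_def row_mult_Amat)
  ultimately show ?thesis
    using i level_gf_rec[OF S i] by (simp add: row_mult_tridiag lower_levels_def algebra_simps)
qed

lemma level_gf_eq_row_mult_Fmat:
  assumes S: "S = stepsC \<or> S = stepsE" and i: "i \<le> k"
  shows "level_gf S k i = row_mult (lower_levels S (level_gf S) k) (Fmat (k + 1)) i"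
proof -
  have "row_mult (lower_levels S (level_gf S) k) (Fmat (k + 1)) i
      = row_mult (row_mult (level_gf S k) (tridiag (k + 1))) (Fmat (k + 1)) i"
    using level_gf_tridiag[OF S] carrier_matD(1)[OF Fmat_carrier] by (intro row_mult_cong) simp
  also have "\<dots> = level_gf S k i"
    using row_mult_right_inverse[OF tridiag_carrier Fmat_carrier tridiag_mult_Fmat] i by simp
  finally show ?thesis ..
qed

(* Unlike comps12, this contains the empty composition of 0, which starts the recursion. *)
definition compositions12 :: "nat \<Rightarrow> nat list set" where
  "compositions12 k = {ns. set ns \<subseteq> {1, 2} \<and> sum_list ns = k}"

lemma comps12_eq_compositions12: "1 \<le> k \<Longrightarrow> comps12 k = compositions12 k"
  by (auto simp: comps12_def compositions12_def)

lemma finite_compositions12: "finite (compositions12 k)"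
proof (rule finite_subset[OF _ finite_lists_length_le[of "{1, 2}" k]])
  have "length ns \<le> sum_list ns" if "set ns \<subseteq> {1, 2 :: nat}" for ns
    using that by (induction ns) auto
  then show "compositions12 k \<subseteq> {ns. set ns \<subseteq> {1, 2} \<and> length ns \<le> k}"
    by (auto simp: compositions12_def)
qed simp

lemma compositions12_0: "compositions12 0 = {[]}"
proof -
  have "ns = []" if "set ns \<subseteq> {1, 2}" "sum_list ns = (0 :: nat)" for ns
    using that by (cases ns) auto
  then show ?thesis
    by (auto simp: compositions12_def)
qed

lemma compositions12_Suc:
  "compositions12 (Suc k) = (\<lambda>ns. ns @ [1]) ` compositions12 k
     \<union> (\<lambda>ns. ns @ [2]) ` (if k = 0 then {} else compositions12 (k - 1))"
proof (intro Set.set_eqI iffI)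
  fix xs assume xs: "xs \<in> compositions12 (Suc k)"
  then obtain ns n where "xs = ns @ [n]"
    by (cases xs rule: rev_cases) (auto simp: compositions12_def)
  with xs show "xs \<in> (\<lambda>ns. ns @ [1]) ` compositions12 k
     \<union> (\<lambda>ns. ns @ [2]) ` (if k = 0 then {} else compositions12 (k - 1))"
    by (auto simp: compositions12_def)
qed (auto simp: compositions12_def split: if_splits)

lemma JF_prod_snoc:
  "JF_prod S M s (ns @ [n])
     = JF_prod S M s ns * Jmat S n (s + sum_list ns + n + 1) * Fmat (s + sum_list ns + n + 1)"
  by (induction ns arbitrary: M s) (auto simp: add.assoc)

lemma JF_prod_carrier:
  "M \<in> carrier_mat r (s + 1) \<Longrightarrow> set ns \<subseteq> {1, 2}
     \<Longrightarrow> JF_prod S M s ns \<in> carrier_mat r (s + sum_list ns + 1)"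
proof (induction ns arbitrary: M s)
  case (Cons n ns)
  then have "Jmat S n (s + n + 1) \<in> carrier_mat (s + 1) (s + n + 1)"
    using Jmat_carrier[of n S "s + n + 1"] by auto
  then have "M * Jmat S n (s + n + 1) * Fmat (s + n + 1) \<in> carrier_mat r (s + n + 1)"
    using Cons.prems(1) by (intro mult_carrier_mat[OF mult_carrier_mat Fmat_carrier])
  then show ?case
    using Cons.IH[of _ "s + n"] Cons.prems(2) by (simp add: ac_simps)
qed simp

definition composition_gf :: "(int \<times> int) set \<Rightarrow> nat \<Rightarrow> nat \<Rightarrow> real fps" where
  "composition_gf S k i = (\<Sum>ns\<in>compositions12 k. fps_X ^ length ns * JF_prod S (1\<^sub>m 1) 0 ns $$ (0, i))"

lemma sum_compositions12_snoc:
  assumes n: "n \<in> {1, 2}" and i: "i < m + n + 1"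
  shows "(\<Sum>ns\<in>compositions12 m. fps_X ^ length (ns @ [n]) * JF_prod S (1\<^sub>m 1) 0 (ns @ [n]) $$ (0, i))
     = fps_X * row_mult (row_mult (composition_gf S m) (Jmat S n (m + n + 1))) (Fmat (m + n + 1)) i"
proof -
  let ?J = "Jmat S n (m + n + 1)" and ?F = "Fmat (m + n + 1)"
  let ?row = "\<lambda>ns l. JF_prod S (1\<^sub>m 1) 0 ns $$ (0, l)"
  have J: "?J \<in> carrier_mat (m + 1) (m + n + 1)"
    using Jmat_carrier[OF n, of S "m + n + 1"] by simp
  have summand: "fps_X ^ length (ns @ [n]) * JF_prod S (1\<^sub>m 1) 0 (ns @ [n]) $$ (0, i)
      = fps_X * (fps_X ^ length ns * row_mult (row_mult (?row ns) ?J) ?F i)"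
    if "ns \<in> compositions12 m" for ns
  proof -
    have P: "JF_prod S (1\<^sub>m 1) 0 ns \<in> carrier_mat 1 (m + 1)"
      using that JF_prod_carrier[of "1\<^sub>m 1" 1 0 ns S] by (simp add: compositions12_def)
    have "JF_prod S (1\<^sub>m 1) 0 (ns @ [n]) $$ (0, i) = (JF_prod S (1\<^sub>m 1) 0 ns * ?J * ?F) $$ (0, i)"
      using that by (simp add: JF_prod_snoc compositions12_def)
    also have "\<dots> = row_mult (\<lambda>j. (JF_prod S (1\<^sub>m 1) 0 ns * ?J) $$ (0, j)) ?F i"
      using P J i by (intro index_mult_mat_row_mult) auto
    also have "\<dots> = row_mult (row_mult (?row ns) ?J) ?F i"
      using P J carrier_matD(1)[OF Fmat_carrier] by (intro row_mult_cong index_mult_mat_row_mult) auto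
    finally show ?thesis
      by simp
  qed
  have gf: "composition_gf S m = (\<lambda>l. \<Sum>ns\<in>compositions12 m. fps_X ^ length ns * ?row ns l)"
    by (simp add: fun_eq_iff composition_gf_def)
  have inner: "row_mult (composition_gf S m) ?J
      = (\<lambda>j. \<Sum>ns\<in>compositions12 m. fps_X ^ length ns * row_mult (?row ns) ?J j)"
    unfolding gf by (simp add: fun_eq_iff row_mult_linear)
  have "(\<Sum>ns\<in>compositions12 m. fps_X ^ length (ns @ [n]) * JF_prod S (1\<^sub>m 1) 0 (ns @ [n]) $$ (0, i))
      = fps_X * (\<Sum>ns\<in>compositions12 m. fps_X ^ length ns * row_mult (row_mult (?row ns) ?J) ?F i)"
    unfolding sum_distrib_left by (rule sum.cong[OF refl summand])
  also have "\<dots> = fps_X * row_mult (row_mult (composition_gf S m) ?J) ?F i"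
    unfolding inner row_mult_linear ..
  finally show ?thesis .
qed

lemma composition_gf_eq_row_mult_Fmat:
  assumes i: "i \<le> k"
  shows "composition_gf S k i = row_mult (lower_levels S (composition_gf S) k) (Fmat (k + 1)) i"
proof (cases k)
  case 0
  have "lower_levels S (composition_gf S) 0 0 = 1"
    using Jmat_carrier[of 1 S 1] Jmat_carrier[of 2 S 1] by (simp add: lower_levels_def row_mult_zero_rows)
  moreover have "composition_gf S 0 0 = 1"
    by (simp add: composition_gf_def compositions12_0)
  moreover have "row_mult u (Fmat 1) 0 = u 0" for u :: "nat \<Rightarrow> real fps"
    unfolding Fmat_1 by (simp add: row_mult_def)
  ultimately show ?thesis
    using 0 i by simp
next
  case (Suc m)
  let ?F = "Fmat (m + 2)"
  let ?f = "\<lambda>ns. fps_X ^ length ns * JF_prod S (1\<^sub>m 1) 0 ns $$ (0, i)"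
  let ?part = "\<lambda>n m'. fps_X * row_mult (row_mult (composition_gf S m') (Jmat S n (m + 2))) ?F i"
  have "composition_gf S k i = sum ?f ((\<lambda>ns. ns @ [1]) ` compositions12 m)
      + sum ?f ((\<lambda>ns. ns @ [2]) ` (if m = 0 then {} else compositions12 (m - 1)))"
    unfolding composition_gf_def Suc compositions12_Suc
    by (rule sum.union_disjoint) (auto simp: finite_compositions12)
  also have "\<dots> = ?part 1 m + (if m = 0 then 0 else ?part 2 (m - 1))"
    using i Suc sum_compositions12_snoc[of 1 i m S] sum_compositions12_snoc[of 2 i "m - 1" S]
    by (simp add: sum.reindex inj_on_def)
  also have "\<dots> = ?part 1 m + ?part 2 (m - 1)"
    using Jmat_carrier[of 2 S "m + 2"] by (auto simp: row_mult_def)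
  also have "\<dots> = row_mult (lower_levels S (composition_gf S) k) (Fmat (k + 1)) i"
  proof -
    have "lower_levels S (composition_gf S) k = (\<lambda>j. fps_X * row_mult (composition_gf S m) (Jmat S 1 (m + 2)) j
        + fps_X * row_mult (composition_gf S (m - 1)) (Jmat S 2 (m + 2)) j)"
      by (simp add: fun_eq_iff lower_levels_def Suc distrib_left)
    then show ?thesis
      by (simp add: Suc row_mult_add row_mult_scale)
  qed
  finally show ?thesis .
qed

theorem proposition2p11:
  fixes S :: "(int \<times> int) set" and k :: nat
  assumes "S = stepsC \<or> S = stepsE"
    and "k \<ge> 1"
  shows "\<forall>i\<le>k.
    Abs_fps (\<lambda>n. of_nat (num_walks S n (int k - int i, int i)) :: real)
    = (\<Sum>ns\<in>comps12 k. fps_X ^ length ns * (JF_prod S (1\<^sub>m 1) 0 ns) $$ (0, i))"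
proof (intro allI impI)
  fix i assume "i \<le> k"
  then have "level_gf S k i = composition_gf S k i"
    using level_recurrence_unique[of "level_gf S" S "composition_gf S"]
      level_gf_eq_row_mult_Fmat[OF assms(1)] composition_gf_eq_row_mult_Fmat by blast
  then show "Abs_fps (\<lambda>n. of_nat (num_walks S n (int k - int i, int i)) :: real)
    = (\<Sum>ns\<in>comps12 k. fps_X ^ length ns * (JF_prod S (1\<^sub>m 1) 0 ns) $$ (0, i))"
    by (simp add: level_gf_def walk_gf_def composition_gf_def comps12_eq_compositions12[OF assms(2)])
qed

end
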